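(* Consider the complex polynomial optimization problem $\inf\{f : g_j\ge0,\ j\in[m]\}$ and assume it is a quadratically constrained quadratic program, i.e. $\deg f\le2$ and $1\le\deg g_j\le2$ for all $j\in[m]$. Then the term-sparsity relaxation with $d=1$, $k=1$ and the dense first-order relaxation have the same optimal value: $\rho^{\mathrm{ts}}_{1,1}=\rho_1$.
   Context: Notation: $[n]=\{1,\dots,n\}$; $\mathbb N^n_t=\{\alpha\in\mathbb N^n:\sum_i\alpha_i\le t\}$. Let $\mathbf z=(z_1,\dots,z_n)$ be complex variables and $\bar{\mathbf z}$ their conjugates. A polynomial $p\in\mathbb C[\mathbf z,\bar{\mathbf z}]$ is written $p=\sum_{(\beta,\gamma)}p_{\beta,\gamma}\mathbf z^\beta\bar{\mathbf z}^\gamma$; its support is $\mathrm{supp}(p)=\{(\beta,\gamma)\in\mathbb N^n\times\mathbb N^n:p_{\beta,\gamma}\neq0\}$ and $\deg p=\max\{|\beta|+|\gamma|:(\beta,\gamma)\in\mathrm{supp}(p)\}$. $p$ is Hermitian if $p_{\beta,\gamma}=\overline{p_{\gamma,\beta}}$. For $(\beta,\gamma)\in\mathbb N^n\times\mathbb N^n$ and $\mathscr B\subseteq\mathbb N^n\times\mathbb N^n$, $(\beta,\gamma)+\mathscr B=\{(\beta+\beta',\gamma+\gamma'):(\beta',\gamma')\in\mathscr B\}$. The problem has Hermitian $f,g_1,\dots,g_m$; $d_j=\lceil\deg g_j/2\rceil$, $d_0=0$, $g_0=1$, $d_{\min}=\max\{\lceil\deg f/2\rceil,d_1,\dots,d_m\}$,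 and $\mathscr A=\mathrm{supp}(f)\cup\bigcup_{j=1}^m\mathrm{supp}(g_j)$. Moments: $\mathbf y=(y_{\beta,\gamma})$ complex with $y_{\beta,\gamma}=\overline{y_{\gamma,\beta}}$; $L_{\mathbf y}(p)=\sum p_{\beta,\gamma}y_{\beta,\gamma}$; for Hermitian $g$, $\mathbf M_t(g\mathbf y)$ is the Hermitian matrix indexed by $\mathbb N^n_t$ with $(\beta,\gamma)$ entry $\sum_{(\beta',\gamma')}g_{\beta',\gamma'}y_{\beta+\beta',\gamma+\gamma'}$, and $\mathbf M_t(\mathbf y)=\mathbf M_t(1\cdot\mathbf y)$. Dense relaxation $(Q_d)$, $d\ge d_{\min}$: minimize $L_{\mathbf y}(f)$ s.t. $\mathbf M_d(\mathbf y)\succeq0$, $\mathbf M_{d-d_j}(g_j\mathbf y)\succeq0$ ($j\in[m]$), $y_{\mathbf 0,\mathbf 0}=1$; optimal value $\rho_d$. Graphs and matrices: graphs are undirected and simple; for a graph $G$ on an ordered node set $V$ with $|V|=r$, $B_G$ is its adjacency matrix with ones on the diagonal, $\circ$ is the entrywise product, $\mathbf H^r_+$ is the cone of $r\times r$ Hermitian PSD matrices indexed by $V$, $\Pi_G(Q)$ keeps the entries $(\beta,\gamma)$ of $Q$ with $\beta=\gamma$ or $\{\beta,\gamma\}\in E(G)$ and sets the others to $0$, and $\Pi_G(\mathbf H^r_+)=\{\Pi_G(Q):Q\in\mathbf H^r_+\}$. A chordal extension $\overline G$ of $G$ is a chordal graph on the same nodes containing $G$; a fixed rule $G\mapsto\overline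 G$ is used, satisfying $G\subseteq H\Rightarrow\overline G\subseteq\overline H$ (subgraph inclusion). Term sparsity: for a graph $G$ with nodes in $\mathbb N^n$ and Hermitian $g$, $\mathrm{supp}_g(G)=\{(\beta+\beta',\gamma+\gamma'):\ (\beta=\gamma\in V(G)\text{ or }\{\beta,\gamma\}\in E(G)),\ (\beta',\gamma')\in\mathrm{supp}(g)\}$. Fix $d\ge d_{\min}$. The tsp graph $G^{\mathrm{tsp}}_d$ has nodes $\mathbb N^n_d$ and edges $\{\beta,\gamma\}$, $\beta\ne\gamma$, with $(\beta,\gamma)\in\mathscr A$. Put $G^{(0)}_{d,0}=G^{\mathrm{tsp}}_d$ and, for $j\in[m]$, let $G^{(0)}_{d,j}$ be the graph on $\mathbb N^n_{d-d_j}$ without edges. For $k\ge1$ and $j\in\{0\}\cup[m]$, $F^{(k)}_{d,j}$ is the graph on $\mathbb N^n_{d-d_j}$ whose edges are the $\{\beta,\gamma\}$, $\beta\ne\gamma$, with $((\beta,\gamma)+\mathrm{supp}(g_j))\cap\bigcup_{i=0}^m\mathrm{supp}_{g_i}(G^{(k-1)}_{d,i})\neq\emptyset$, and $G^{(k)}_{d,j}=\overline{F^{(k)}_{d,j}}$. With $r_j=\binom{n+d-d_j}{d-d_j}$, the relaxation $(Q^{\mathrm{ts}}_{d,k})$ is: minimize $L_{\mathbf y}(f)$ s.t. $B_{G^{(k)}_{d,j}}\circ\mathbf M_{d-d_j}(g_j\mathbf y)\in\Pi_{G^{(k)}_{d,j}}(\mathbf H^{r_j}_+)$ for all $j\in\{0\}\cup[m]$,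 and $y_{\mathbf 0,\mathbf 0}=1$; optimal value $\rho^{\mathrm{ts}}_{d,k}$. *)

theory Defs
  imports Complex_Main "HOL-Library.Extended_Real"
begin

text \<open>Exponent vectors are functions nat => nat (only the first n coordinates are
used).  A polynomial p in C[z, conj z] is its coefficient function on pairs
(beta, gamma) of exponent vectors.\<close>

type_synonym expo = "nat \<Rightarrow> nat"
type_synonym cpoly = "expo \<times> expo \<Rightarrow> complex"

definition zexp :: expo where "zexp = (\<lambda>_. 0)"

definition eadd :: "expo \<Rightarrow> expo \<Rightarrow> expo" where
  "eadd a b = (\<lambda>i. a i + b i)"

definition elen :: "nat \<Rightarrow> expo \<Rightarrow> nat" where
  "elen n a = (\<Sum>i<n. a i)"

definition Nmon :: "nat \<Rightarrow> nat \<Rightarrow> expo set" where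
  "Nmon n t = {a. (\<forall>i\<ge>n. a i = 0) \<and> elen n a \<le> t}"

definition supp :: "cpoly \<Rightarrow> (expo \<times> expo) set" where
  "supp p = {bc. p bc \<noteq> 0}"

definition is_cpoly :: "nat \<Rightarrow> cpoly \<Rightarrow> bool" where
  "is_cpoly n p \<longleftrightarrow> finite (supp p) \<and>
     (\<forall>(b, c) \<in> supp p. \<forall>i\<ge>n. b i = 0 \<and> c i = 0)"

definition deg :: "nat \<Rightarrow> cpoly \<Rightarrow> nat" where
  "deg n p = (if supp p = {} then 0 else Max ((\<lambda>(b, c). elen n b + elen n c) ` supp p))"

definition hermitian :: "cpoly \<Rightarrow> bool" where
  "hermitian p \<longleftrightarrow> (\<forall>b c. p (b, c) = cnj (p (c, b)))"

definition one_poly :: cpoly where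
  "one_poly = (\<lambda>(b, c). if b = zexp \<and> c = zexp then 1 else 0)"

definition herm_moments :: "(expo \<times> expo \<Rightarrow> complex) \<Rightarrow> bool" where
  "herm_moments y \<longleftrightarrow> (\<forall>b c. y (b, c) = cnj (y (c, b)))"

definition Ly :: "(expo \<times> expo \<Rightarrow> complex) \<Rightarrow> cpoly \<Rightarrow> complex" where
  "Ly y p = (\<Sum>(b, c) \<in> supp p. p (b, c) * y (b, c))"

definition Mmat :: "nat \<Rightarrow> nat \<Rightarrow> cpoly \<Rightarrow> (expo \<times> expo \<Rightarrow> complex) \<Rightarrow> expo \<Rightarrow> expo \<Rightarrow> complex" where
  "Mmat n t g y = (\<lambda>b c. if b \<in> Nmon n t \<and> c \<in> Nmon n t
      then (\<Sum>(b', c') \<in> supp g. g (b', c') * y (eadd b b', eadd c c')) else 0)"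

definition psd :: "'a set \<Rightarrow> ('a \<Rightarrow> 'a \<Rightarrow> complex) \<Rightarrow> bool" where
  "psd V Q \<longleftrightarrow> (\<forall>i\<in>V. \<forall>j\<in>V. Q i j = cnj (Q j i)) \<and>
     (\<forall>v :: 'a \<Rightarrow> complex. 0 \<le> Re (\<Sum>i\<in>V. \<Sum>j\<in>V. cnj (v i) * Q i j * v j))"

type_synonym 'a graph = "'a set \<times> 'a set set"

definition is_graph :: "'a graph \<Rightarrow> bool" where
  "is_graph G \<longleftrightarrow> (\<forall>e \<in> snd G. \<exists>a b. a \<noteq> b \<and> e = {a, b} \<and> a \<in> fst G \<and> b \<in> fst G)"

definition subgraph :: "'a graph \<Rightarrow> 'a graph \<Rightarrow> bool" where
  "subgraph G H \<longleftrightarrow> fst G \<subseteq> fst H \<and> snd G \<subseteq> snd H"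

definition chordal :: "'a graph \<Rightarrow> bool" where
  "chordal G \<longleftrightarrow> (\<forall>cs. distinct cs \<and> length cs \<ge> 4 \<and> set cs \<subseteq> fst G \<and>
      (\<forall>i<length cs. {cs ! i, cs ! ((i + 1) mod length cs)} \<in> snd G) \<longrightarrow>
      (\<exists>i<length cs. \<exists>j<length cs. i \<noteq> j \<and> j \<noteq> (i + 1) mod length cs \<and>
          i \<noteq> (j + 1) mod length cs \<and> {cs ! i, cs ! j} \<in> snd G))"

definition chordal_ext_rule :: "('a graph \<Rightarrow> 'a graph) \<Rightarrow> bool" where
  "chordal_ext_rule ext \<longleftrightarrow>
     (\<forall>G. is_graph G \<longrightarrow> is_graph (ext G) \<and> chordal (ext G) \<and>
          fst (ext G) = fst G \<and> snd G \<subseteq> snd (ext G)) \<and>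
     (\<forall>G H. is_graph G \<and> is_graph H \<and> subgraph G H \<longrightarrow> subgraph (ext G) (ext H))"

definition Bcirc :: "'a graph \<Rightarrow> ('a \<Rightarrow> 'a \<Rightarrow> complex) \<Rightarrow> 'a \<Rightarrow> 'a \<Rightarrow> complex" where
  "Bcirc G M = (\<lambda>b c. (if b \<in> fst G \<and> c \<in> fst G \<and> (b = c \<or> {b, c} \<in> snd G) then 1 else 0) * M b c)"

definition PiG :: "'a graph \<Rightarrow> ('a \<Rightarrow> 'a \<Rightarrow> complex) \<Rightarrow> 'a \<Rightarrow> 'a \<Rightarrow> complex" where
  "PiG G Q = (\<lambda>b c. if b \<in> fst G \<and> c \<in> fst G \<and> (b = c \<or> {b, c} \<in> snd G) then Q b c else 0)"

definition PiG_psd :: "'a graph \<Rightarrow> ('a \<Rightarrow> 'a \<Rightarrow> complex) set" where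
  "PiG_psd G = {PiG G Q | Q. psd (fst G) Q}"

definition gg :: "(nat \<Rightarrow> cpoly) \<Rightarrow> nat \<Rightarrow> cpoly" where
  "gg g j = (if j = 0 then one_poly else g j)"

definition dj :: "nat \<Rightarrow> (nat \<Rightarrow> cpoly) \<Rightarrow> nat \<Rightarrow> nat" where
  "dj n g j = (if j = 0 then 0 else (deg n (g j) + 1) div 2)"

definition Aset :: "cpoly \<Rightarrow> (nat \<Rightarrow> cpoly) \<Rightarrow> nat \<Rightarrow> (expo \<times> expo) set" where
  "Aset f g m = supp f \<union> (\<Union>j\<in>{1..m}. supp (g j))"

definition rho_dense :: "nat \<Rightarrow> cpoly \<Rightarrow> (nat \<Rightarrow> cpoly) \<Rightarrow> nat \<Rightarrow> nat \<Rightarrow> ereal" where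
  "rho_dense n f g m d = Inf {ereal (Re (Ly y f)) | y.
      herm_moments y \<and> y (zexp, zexp) = 1 \<and>
      psd (Nmon n d) (Mmat n d one_poly y) \<and>
      (\<forall>j\<in>{1..m}. psd (Nmon n (d - dj n g j)) (Mmat n (d - dj n g j) (g j) y))}"

definition tsp_graph :: "nat \<Rightarrow> cpoly \<Rightarrow> (nat \<Rightarrow> cpoly) \<Rightarrow> nat \<Rightarrow> nat \<Rightarrow> expo graph" where
  "tsp_graph n f g m d = (Nmon n d,
     {{b, c} | b c. b \<in> Nmon n d \<and> c \<in> Nmon n d \<and> b \<noteq> c \<and> (b, c) \<in> Aset f g m})"

definition supp_g :: "cpoly \<Rightarrow> expo graph \<Rightarrow> (expo \<times> expo) set" where
  "supp_g g G = {(eadd b b', eadd c c') | b c b' c'.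
      ((b = c \<and> b \<in> fst G) \<or> {b, c} \<in> snd G) \<and> (b', c') \<in> supp g}"

definition Fgraph :: "nat \<Rightarrow> (nat \<Rightarrow> cpoly) \<Rightarrow> nat \<Rightarrow> nat \<Rightarrow> (nat \<Rightarrow> expo graph) \<Rightarrow> nat \<Rightarrow> expo graph" where
  "Fgraph n g m d Gprev j = (Nmon n (d - dj n g j),
     {{b, c} | b c. b \<in> Nmon n (d - dj n g j) \<and> c \<in> Nmon n (d - dj n g j) \<and> b \<noteq> c \<and>
        {(eadd b b', eadd c c') | b' c'. (b', c') \<in> supp (gg g j)}
          \<inter> (\<Union>i\<in>{0..m}. supp_g (gg g i) (Gprev i)) \<noteq> {}})"

fun TS :: "(expo graph \<Rightarrow> expo graph) \<Rightarrow> nat \<Rightarrow> cpoly \<Rightarrow> (nat \<Rightarrow> cpoly) \<Rightarrow> nat \<Rightarrow> nat \<Rightarrow> nat \<Rightarrow> nat \<Rightarrow> expo graph"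
  where
  "TS ext n f g m d 0 = (\<lambda>j.
     if j = 0 then tsp_graph n f g m d else (Nmon n (d - dj n g j), {}))"
| "TS ext n f g m d (Suc k) = (\<lambda>j. ext (Fgraph n g m d (TS ext n f g m d k) j))"

definition rho_ts :: "(expo graph \<Rightarrow> expo graph) \<Rightarrow> nat \<Rightarrow> cpoly \<Rightarrow> (nat \<Rightarrow> cpoly) \<Rightarrow> nat \<Rightarrow> nat \<Rightarrow> nat \<Rightarrow> ereal" where
  "rho_ts ext n f g m d k = Inf {ereal (Re (Ly y f)) | y.
      herm_moments y \<and> y (zexp, zexp) = 1 \<and>
      (\<forall>j\<in>{0..m}. Bcirc (TS ext n f g m d k j) (Mmat n (d - dj n g j) (gg g j) y)
                     \<in> PiG_psd (TS ext n f g m d k j))}"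

end

theory Submission
  imports Defs
begin

(*
  Every feasible point of the dense relaxation is feasible for the sparse one, so
  rho_ts <= rho always. Conversely, for a QCQP at d = k = 1 every localizing matrix
  M_0(g_j y) is 1 x 1, so the only genuinely sparse constraint is the partially specified
  moment matrix M_1(y). Writing a PSD completion Q of it back into y gives a dense-feasible
  point. Every tsp edge is an edge of G^(1)_{1,0}, so the completion leaves y unchanged on
  the support set A, hence changes neither the objective nor the constraints L_y(g_j) >= 0.
*)

definition dense_feasible :: "nat \<Rightarrow> (nat \<Rightarrow> cpoly) \<Rightarrow> nat \<Rightarrow> nat \<Rightarrow> (expo \<times> expo \<Rightarrow> complex) \<Rightarrow> bool"
  where "dense_feasible n g m d y \<longleftrightarrow> herm_moments y \<and> y (zexp, zexp) = 1 \<and>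
      (\<forall>j\<in>{0..m}. psd (Nmon n (d - dj n g j)) (Mmat n (d - dj n g j) (gg g j) y))"

definition ts_feasible :: "(expo graph \<Rightarrow> expo graph) \<Rightarrow> nat \<Rightarrow> cpoly \<Rightarrow> (nat \<Rightarrow> cpoly) \<Rightarrow> nat \<Rightarrow>
    nat \<Rightarrow> nat \<Rightarrow> (expo \<times> expo \<Rightarrow> complex) \<Rightarrow> bool"
  where "ts_feasible ext n f g m d k y \<longleftrightarrow> herm_moments y \<and> y (zexp, zexp) = 1 \<and>
      (\<forall>j\<in>{0..m}. Bcirc (TS ext n f g m d k j) (Mmat n (d - dj n g j) (gg g j) y)
                     \<in> PiG_psd (TS ext n f g m d k j))"

lemma rho_ts_eq_Inf_ts_feasible:
  "rho_ts ext n f g m d k = Inf {ereal (Re (Ly y f)) | y. ts_feasible ext n f g m d k y}"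
  by (simp add: rho_ts_def ts_feasible_def)

lemma ball_0_to_m_iff: "(\<forall>j\<in>{0..m::nat}. P j) \<longleftrightarrow> P 0 \<and> (\<forall>j\<in>{1..m}. P j)"
proof -
  have "{0..m} = insert 0 {1..m}"
    by auto
  then show ?thesis
    by simp
qed

lemma rho_dense_eq_Inf_dense_feasible:
  "rho_dense n f g m d = Inf {ereal (Re (Ly y f)) | y. dense_feasible n g m d y}"
proof -
  have "dense_feasible n g m d y \<longleftrightarrow> herm_moments y \<and> y (zexp, zexp) = 1 \<and>
      psd (Nmon n d) (Mmat n d one_poly y) \<and>
      (\<forall>j\<in>{1..m}. psd (Nmon n (d - dj n g j)) (Mmat n (d - dj n g j) (g j) y))" for y
    unfolding dense_feasible_def ball_0_to_m_iff by (simp add: dj_def gg_def)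
  then show ?thesis
    by (simp add: rho_dense_def)
qed

lemma eadd_zexp [simp]: "eadd b zexp = b" "eadd zexp b = b"
  by (auto simp: eadd_def zexp_def)

lemma supp_one_poly: "supp one_poly = {(zexp, zexp)}"
  by (auto simp: supp_def one_poly_def split: if_splits)

lemma zexp_in_Nmon [simp]: "zexp \<in> Nmon n t"
  by (simp add: Nmon_def elen_def zexp_def)

lemma Nmon_0: "Nmon n 0 = {zexp}"
proof -
  have "a = zexp" if "a \<in> Nmon n 0" for a
  proof
    fix i
    have "\<forall>k\<in>{..<n}. a k = 0"
      using that by (simp add: Nmon_def elen_def)
    then show "a i = zexp i"
      using that by (cases "i < n") (auto simp: Nmon_def zexp_def)
  qed
  then show ?thesis
    by auto
qed

lemma Mmat_one_poly:
  "b \<in> Nmon n t \<Longrightarrow> c \<in> Nmon n t \<Longrightarrow> Mmat n t one_poly y b c = y (b, c)"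
  by (simp add: Mmat_def supp_one_poly, simp add: one_poly_def)

lemma Mmat_cong:
  assumes "\<And>b c b' c'. b \<in> Nmon n t \<Longrightarrow> c \<in> Nmon n t \<Longrightarrow> (b', c') \<in> supp h \<Longrightarrow>
      y' (eadd b b', eadd c c') = y (eadd b b', eadd c c')"
  shows "Mmat n t h y' = Mmat n t h y"
  unfolding Mmat_def fun_eq_iff using assms by (auto intro!: sum.cong)

lemma Ly_cong: "(\<And>p. p \<in> supp f \<Longrightarrow> y' p = y p) \<Longrightarrow> Ly y' f = Ly y f"
  unfolding Ly_def by (auto intro!: sum.cong)

lemma psd_cong:
  assumes "\<And>i j. i \<in> V \<Longrightarrow> j \<in> V \<Longrightarrow> Q i j = Q' i j"
  shows "psd V Q = psd V Q'"
proof -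
  have "(\<Sum>i\<in>V. \<Sum>j\<in>V. cnj (v i) * Q i j * v j) = (\<Sum>i\<in>V. \<Sum>j\<in>V. cnj (v i) * Q' i j * v j)" for v
    using assms by (intro sum.cong) auto
  then show ?thesis
    unfolding psd_def using assms by auto
qed

lemma Bcirc_eq_PiG: "Bcirc G M = PiG G M"
  by (auto simp: Bcirc_def PiG_def fun_eq_iff)

lemma Bcirc_in_PiG_psd: "psd (fst G) M \<Longrightarrow> Bcirc G M \<in> PiG_psd G"
  by (auto simp: Bcirc_eq_PiG PiG_psd_def)

lemma psd_singleton_of_Bcirc_in_PiG_psd:
  assumes "fst G = {v}" and "Bcirc G M \<in> PiG_psd G"
  shows "psd {v} M"
proof -
  obtain Q where "Bcirc G M = PiG G Q" and "psd {v} Q"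
    using assms by (auto simp: PiG_psd_def)
  then have "M v v = Q v v"
    using assms(1) by (metis Bcirc_eq_PiG PiG_def fst_conv insertI1)
  then show ?thesis
    using \<open>psd {v} Q\<close> psd_cong[of "{v}" M Q] by simp
qed

lemma moment_matrix_completion:
  assumes herm: "herm_moments y" and nodes: "fst G = Nmon n t"
    and sparse: "Bcirc G (Mmat n t one_poly y) \<in> PiG_psd G"
  obtains y' where "herm_moments y'" and "psd (Nmon n t) (Mmat n t one_poly y')"
    and "\<And>b c. (b \<in> Nmon n t \<and> c \<in> Nmon n t \<longrightarrow> b = c \<or> {b, c} \<in> snd G) \<Longrightarrow> y' (b, c) = y (b, c)"
proof -
  define V where "V = Nmon n t"
  obtain Q where Q: "Bcirc G (Mmat n t one_poly y) = PiG G Q" and "psd V Q"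
    using sparse nodes by (auto simp: PiG_psd_def V_def)
  define y' where "y' = (\<lambda>(b, c). if b \<in> V \<and> c \<in> V then Q b c else y (b, c))"
  have "herm_moments y'"
    unfolding herm_moments_def
  proof (intro allI)
    fix b c
    have "y (b, c) = cnj (y (c, b))"
      using herm unfolding herm_moments_def by blast
    moreover have "b \<in> V \<Longrightarrow> c \<in> V \<Longrightarrow> Q b c = cnj (Q c b)"
      using \<open>psd V Q\<close> unfolding psd_def by blast
    ultimately show "y' (b, c) = cnj (y' (c, b))"
      unfolding y'_def by auto
  qed
  moreover have "psd V (Mmat n t one_poly y')"
    using \<open>psd V Q\<close> psd_cong[of V "Mmat n t one_poly y'" Q]
    by (simp add: Mmat_one_poly y'_def V_def)
  moreover have "y' (b, c) = y (b, c)"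
    if "b \<in> V \<and> c \<in> V \<longrightarrow> b = c \<or> {b, c} \<in> snd G" for b c
  proof (cases "b \<in> V \<and> c \<in> V")
    case True
    then have "b \<in> fst G" "c \<in> fst G" "b = c \<or> {b, c} \<in> snd G"
      using that nodes by (simp_all add: V_def)
    moreover have "Bcirc G (Mmat n t one_poly y) b c = PiG G Q b c"
      using Q by simp
    ultimately have "Q b c = y (b, c)"
      using True by (simp add: Bcirc_def PiG_def Mmat_one_poly V_def)
    then show ?thesis
      using True by (simp add: y'_def)
  qed (auto simp: y'_def)
  ultimately show ?thesis
    using that by (simp add: V_def)
qed

lemma chordal_ext_ruleD:
  assumes "chordal_ext_rule ext" and "is_graph G"
  shows "is_graph (ext G)" and "fst (ext G) = fst G" and "snd G \<subseteq> snd (ext G)"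
proof -
  have "\<forall>G. is_graph G \<longrightarrow> is_graph (ext G) \<and> chordal (ext G) \<and> fst (ext G) = fst G \<and> snd G \<subseteq> snd (ext G)"
    using assms(1) unfolding chordal_ext_rule_def by (rule conjunct1)
  from this[rule_format, OF assms(2)]
  show "is_graph (ext G)" and "fst (ext G) = fst G" and "snd G \<subseteq> snd (ext G)"
    by auto
qed

lemma is_graph_Fgraph: "is_graph (Fgraph n g m d Gp j)"
  unfolding is_graph_def Fgraph_def by auto

lemma is_graph_TS:
  assumes "chordal_ext_rule ext"
  shows "is_graph (TS ext n f g m d k j)"
proof (cases k)
  case 0
  then show ?thesis
    by (auto simp: is_graph_def tsp_graph_def)
next
  case (Suc k')
  then show ?thesis
    using chordal_ext_ruleD(1)[OF assms is_graph_Fgraph] by simp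
qed

lemma fst_TS:
  assumes "chordal_ext_rule ext"
  shows "fst (TS ext n f g m d k j) = Nmon n (d - dj n g j)"
proof (cases k)
  case 0
  then show ?thesis
    by (simp add: tsp_graph_def dj_def)
next
  case (Suc k')
  then show ?thesis
    using chordal_ext_ruleD(2)[OF assms is_graph_Fgraph] by (simp add: Fgraph_def)
qed

lemma edges_Fgraph_subset_TS:
  assumes "chordal_ext_rule ext"
  shows "snd (Fgraph n g m d (TS ext n f g m d k) j) \<subseteq> snd (TS ext n f g m d (Suc k) j)"
  using chordal_ext_ruleD(3)[OF assms is_graph_Fgraph] by simp

lemma supp_g_memI: "{b, c} \<in> snd G \<Longrightarrow> (b', c') \<in> supp h \<Longrightarrow> (eadd b b', eadd c c') \<in> supp_g h G"
  unfolding supp_g_def by blast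

lemma edge_FgraphI:
  assumes "b \<in> Nmon n (d - dj n g j)" "c \<in> Nmon n (d - dj n g j)" "b \<noteq> c"
    and "(b', c') \<in> supp (gg g j)" and "i \<in> {0..m}" and "(eadd b b', eadd c c') \<in> supp_g (gg g i) (Gp i)"
  shows "{b, c} \<in> snd (Fgraph n g m d Gp j)"
proof -
  have "(eadd b b', eadd c c') \<in> {(eadd b b'', eadd c c'') | b'' c''. (b'', c'') \<in> supp (gg g j)}
      \<inter> (\<Union>i\<in>{0..m}. supp_g (gg g i) (Gp i))"
    using assms(4-6) by blast
  then have "{(eadd b b'', eadd c c'') | b'' c''. (b'', c'') \<in> supp (gg g j)}
      \<inter> (\<Union>i\<in>{0..m}. supp_g (gg g i) (Gp i)) \<noteq> {}"
    by blast
  with assms(1-3) show ?thesis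
    unfolding Fgraph_def snd_conv mem_Collect_eq by (intro exI[of _ b] exI[of _ c] conjI refl)
qed

text \<open>An edge \<open>{b, c}\<close> of \<open>G\<^sub>0\<close> survives because \<open>g\<^sub>0 = 1\<close> puts \<open>(b, c) + (0, 0)\<close> into \<open>supp\<^sub>g\<^sub>0(G\<^sub>0)\<close>.\<close>

lemma edges_subset_Fgraph_0:
  assumes "is_graph (Gp 0)" and "fst (Gp 0) = Nmon n d"
  shows "snd (Gp 0) \<subseteq> snd (Fgraph n g m d Gp 0)"
proof
  fix e assume "e \<in> snd (Gp 0)"
  have "\<exists>b c. b \<noteq> c \<and> e = {b, c} \<and> b \<in> fst (Gp 0) \<and> c \<in> fst (Gp 0)"
    using assms(1) \<open>e \<in> snd (Gp 0)\<close> unfolding is_graph_def by (rule bspec)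
  then obtain b c where e: "e = {b, c}" "b \<noteq> c" "b \<in> fst (Gp 0)" "c \<in> fst (Gp 0)"
    by blast
  have nodes: "b \<in> Nmon n (d - dj n g 0)" "c \<in> Nmon n (d - dj n g 0)"
    using e(3,4) assms(2) by (simp_all add: dj_def)
  have zero: "(zexp, zexp) \<in> supp (gg g 0)"
    by (simp add: gg_def supp_one_poly)
  have "(0::nat) \<in> {0..m}"
    by simp
  moreover have "(eadd b zexp, eadd c zexp) \<in> supp_g (gg g 0) (Gp 0)"
    using supp_g_memI[OF _ zero] \<open>e \<in> snd (Gp 0)\<close> e(1) by blast
  ultimately show "e \<in> snd (Fgraph n g m d Gp 0)"
    unfolding e(1) by (rule edge_FgraphI[OF nodes e(2) zero])
qed

lemma tsp_edges_subset_TS_1: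
  assumes "chordal_ext_rule ext"
  shows "snd (tsp_graph n f g m d) \<subseteq> snd (TS ext n f g m d 1 0)"
proof -
  have "fst (TS ext n f g m d 0 0) = Nmon n d"
    by (simp add: tsp_graph_def)
  then have "snd (TS ext n f g m d 0 0) \<subseteq> snd (Fgraph n g m d (TS ext n f g m d 0) 0)"
    by (intro edges_subset_Fgraph_0 is_graph_TS[OF assms])
  then show ?thesis
    using edges_Fgraph_subset_TS[OF assms, of n g m d f 0 0] by simp
qed

lemma dense_feasible_imp_ts_feasible:
  "chordal_ext_rule ext \<Longrightarrow> dense_feasible n g m d y \<Longrightarrow> ts_feasible ext n f g m d k y"
  unfolding dense_feasible_def ts_feasible_def by (simp add: Bcirc_in_PiG_psd fst_TS)

lemma rho_ts_le_rho_dense: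
  "chordal_ext_rule ext \<Longrightarrow> rho_ts ext n f g m d k \<le> rho_dense n f g m d"
  unfolding rho_ts_eq_Inf_ts_feasible rho_dense_eq_Inf_dense_feasible
  by (rule Inf_superset_mono) (auto dest: dense_feasible_imp_ts_feasible)

lemma eq_on_Aset_if_eq_on_TS_1_0:
  assumes ext: "chordal_ext_rule ext"
    and eq: "\<And>b c. (b \<in> Nmon n d \<and> c \<in> Nmon n d \<longrightarrow> b = c \<or> {b, c} \<in> snd (TS ext n f g m d 1 0)) \<Longrightarrow>
        y' (b, c) = y (b, c)"
    and "p \<in> Aset f g m"
  shows "y' p = y p"
proof (cases p)
  case (Pair b c)
  have "{b, c} \<in> snd (TS ext n f g m d 1 0)" if "b \<in> Nmon n d" "c \<in> Nmon n d" "b \<noteq> c"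
    using that \<open>p \<in> Aset f g m\<close> Pair tsp_edges_subset_TS_1[OF ext, of n f g m d]
    by (auto simp: tsp_graph_def)
  then show ?thesis
    using eq Pair by blast
qed

lemma psd_Mmat_0_of_Bcirc_in_PiG_psd:
  assumes "fst G = Nmon n 0" and "Bcirc G (Mmat n 0 h y) \<in> PiG_psd G"
    and "\<And>p. p \<in> supp h \<Longrightarrow> y' p = y p"
  shows "psd (Nmon n 0) (Mmat n 0 h y')"
proof -
  have "Mmat n 0 h y' = Mmat n 0 h y"
    using assms(3) by (intro Mmat_cong) (simp add: Nmon_0)
  moreover have "psd {zexp} (Mmat n 0 h y)"
    using assms(1,2) by (intro psd_singleton_of_Bcirc_in_PiG_psd[of G]) (simp_all add: Nmon_0)
  ultimately show ?thesis
    by (simp add: Nmon_0)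
qed

lemma dj_eq_1: "j \<noteq> 0 \<Longrightarrow> 1 \<le> deg n (g j) \<Longrightarrow> deg n (g j) \<le> 2 \<Longrightarrow> dj n g j = 1"
  by (auto simp: dj_def)

lemma ts_feasible_1_1_imp_dense_feasible:
  assumes ext: "chordal_ext_rule ext"
    and g_deg: "\<forall>j\<in>{1..m}. 1 \<le> deg n (g j) \<and> deg n (g j) \<le> 2"
    and ts: "ts_feasible ext n f g m 1 1 y"
  obtains y' where "dense_feasible n g m 1 y'" and "Ly y' f = Ly y f"
proof -
  let ?G = "TS ext n f g m 1 1"
  have sparse: "\<forall>j\<in>{0..m}. Bcirc (?G j) (Mmat n (1 - dj n g j) (gg g j) y) \<in> PiG_psd (?G j)"
    and "herm_moments y" and y00: "y (zexp, zexp) = 1"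
    using ts by (simp_all add: ts_feasible_def)
  have sparse0: "Bcirc (?G 0) (Mmat n 1 one_poly y) \<in> PiG_psd (?G 0)"
    using bspec[OF sparse, of 0] by (simp add: gg_def dj_def)
  have nodes0: "fst (?G 0) = Nmon n 1"
    using fst_TS[OF ext, of n f g m 1 1 0] by (simp add: dj_def)
  obtain y' where herm: "herm_moments y'" and psd0: "psd (Nmon n 1) (Mmat n 1 one_poly y')"
    and keep: "\<And>b c. (b \<in> Nmon n 1 \<and> c \<in> Nmon n 1 \<longrightarrow> b = c \<or> {b, c} \<in> snd (?G 0)) \<Longrightarrow>
        y' (b, c) = y (b, c)"
    using moment_matrix_completion[OF \<open>herm_moments y\<close> nodes0 sparse0] by blast
  have on_A: "y' p = y p" if "p \<in> Aset f g m" for p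
    using eq_on_Aset_if_eq_on_TS_1_0[where d = 1 and y = y and y' = y', OF ext keep that] .
  have "psd (Nmon n (1 - dj n g j)) (Mmat n (1 - dj n g j) (gg g j) y')" if "j \<in> {1..m}" for j
  proof -
    have gj: "gg g j = g j" and dj: "dj n g j = 1"
      using that g_deg dj_eq_1[of j n g] by (auto simp: gg_def)
    show ?thesis
    proof (simp add: gj dj, rule psd_Mmat_0_of_Bcirc_in_PiG_psd)
      show "fst (?G j) = Nmon n 0"
        using fst_TS[OF ext, of n f g m 1 1 j] by (simp add: dj)
      show "Bcirc (?G j) (Mmat n 0 (g j) y) \<in> PiG_psd (?G j)"
        using bspec[OF sparse, of j] that by (simp add: gj dj)
      show "y' p = y p" if "p \<in> supp (g j)" for p
      proof (rule on_A)
        show "p \<in> Aset f g m"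
          unfolding Aset_def using \<open>j \<in> {1..m}\<close> that by blast
      qed
    qed
  qed
  moreover have "y' (zexp, zexp) = 1"
    using keep[of zexp zexp] y00 by simp
  ultimately have "dense_feasible n g m 1 y'"
    using herm psd0 unfolding dense_feasible_def ball_0_to_m_iff by (simp add: gg_def dj_def)
  moreover have "Ly y' f = Ly y f"
    using on_A by (intro Ly_cong) (simp add: Aset_def)
  ultimately show ?thesis
    using that by blast
qed

theorem mainTheorem4:
  fixes n m :: nat and f :: cpoly and g :: "nat \<Rightarrow> cpoly"
    and ext :: "expo graph \<Rightarrow> expo graph"
  assumes ext: "chordal_ext_rule ext"
    and f_poly: "is_cpoly n f" and f_herm: "hermitian f"
    and g_poly: "\<forall>j\<in>{1..m}. is_cpoly n (g j)"
    and g_herm: "\<forall>j\<in>{1..m}. hermitian (g j)"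
    and f_deg: "deg n f \<le> 2"
    and g_deg: "\<forall>j\<in>{1..m}. 1 \<le> deg n (g j) \<and> deg n (g j) \<le> 2"
  shows "rho_ts ext n f g m 1 1 = rho_dense n f g m 1"
proof (rule antisym)
  show "rho_ts ext n f g m 1 1 \<le> rho_dense n f g m 1"
    using ext by (rule rho_ts_le_rho_dense)
  show "rho_dense n f g m 1 \<le> rho_ts ext n f g m 1 1"
    unfolding rho_ts_eq_Inf_ts_feasible rho_dense_eq_Inf_dense_feasible
  proof (rule Inf_mono)
    fix r assume "r \<in> {ereal (Re (Ly y f)) | y. ts_feasible ext n f g m 1 1 y}"
    then obtain y where "ts_feasible ext n f g m 1 1 y" and r: "r = ereal (Re (Ly y f))"
      by blast
    then obtain y' where "dense_feasible n g m 1 y'" and "Ly y' f = Ly y f"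
      using ts_feasible_1_1_imp_dense_feasible[OF ext g_deg] by blast
    then show "\<exists>s\<in>{ereal (Re (Ly y f)) | y. dense_feasible n g m 1 y}. s \<le> r"
      using r by auto
  qed
qed

end
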